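(* Let $m$ be an even positive integer, $t\ge3$ an odd integer, and $n\ge1$. If there exists an MS$(m,t)$ and there exists an MS$(n,t-1)$, then there exists an MS$(mn,t)$.
   Context: An $n\times n$ integer matrix is a general magic square if all row sums, column sums and the two diagonal sums $\sum_i a_{i,i}$, $\sum_i a_{i,n-1-i}$ are equal. An MS$(n,t)$ ($t$-multimagic square of order $n$) is an $n\times n$ matrix whose entries are exactly $0,1,\dots,n^2-1$ such that the entrywise powers $(a_{i,j}^e)$ are general magic squares for all $e=1,\dots,t$. *)

theory Defs
  imports Main
begin

text \<open>An n x n matrix is modelled as a function a :: nat => nat => int, only the
entries a i j with i, j < n being relevant.\<close>

definition general_magic :: "nat \<Rightarrow> (nat \<Rightarrow> nat \<Rightarrow> int) \<Rightarrow> bool" where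
  "general_magic n a \<longleftrightarrow>
     (\<exists>s. (\<forall>i<n. (\<Sum>j<n. a i j) = s) \<and>
          (\<forall>j<n. (\<Sum>i<n. a i j) = s) \<and>
          (\<Sum>i<n. a i i) = s \<and>
          (\<Sum>i<n. a i (n - 1 - i)) = s)"

definition multimagic :: "nat \<Rightarrow> nat \<Rightarrow> (nat \<Rightarrow> nat \<Rightarrow> nat) \<Rightarrow> bool" where
  "multimagic n t a \<longleftrightarrow>
     bij_betw (\<lambda>(i, j). a i j) ({..<n} \<times> {..<n}) {..<n^2} \<and>
     (\<forall>e\<in>{1..t}. general_magic n (\<lambda>i j. (int (a i j)) ^ e))"

end

theory Submission
  imports Defs
begin

text \<open>Write m = 2h and N = n^2. The square of order m n is cut into m x m blocks of size
  n x n; block (i, j) carries N a(i, j) plus either b or its complement N - 1 - b, the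
  complement being used on a pattern meeting every line of the m x m grid in exactly h cells.
  Along a line of the big square the e-th power sum expands binomially into products of
  power sums of a (up to degree t) and of b or its complement (up to degree e). The complement
  of an MS(n, t-1) has the same line power sums as b up to degree t - 1, and because t is odd,
  b^t + (N - 1 - b)^t has constant line sums, so the balanced pattern makes the degree-t
  contribution constant as well. An MS(2, t) does not exist, so h \<ge> 2, which is what the
  pattern needs.\<close>

definition magic_lines :: "nat \<Rightarrow> (nat \<Rightarrow> nat \<times> nat) set" where
  "magic_lines n = {(\<lambda>v. (i, v)) | i. i < n} \<union> {(\<lambda>v. (v, j)) | j. j < n} \<union>
     {(\<lambda>v. (v, v)), (\<lambda>v. (v, n - 1 - v))}"

definition line_sum :: "nat \<Rightarrow> (nat \<Rightarrow> nat \<Rightarrow> int) \<Rightarrow> (nat \<Rightarrow> nat \<times> nat) \<Rightarrow> int" where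
  "line_sum n g l = (\<Sum>v<n. g (fst (l v)) (snd (l v)))"

lemma row_in_magic_lines: "i < n \<Longrightarrow> (\<lambda>v. (i, v)) \<in> magic_lines n"
  and column_in_magic_lines: "j < n \<Longrightarrow> (\<lambda>v. (v, j)) \<in> magic_lines n"
  and diagonal_in_magic_lines: "(\<lambda>v. (v, v)) \<in> magic_lines n"
  and antidiagonal_in_magic_lines: "(\<lambda>v. (v, n - 1 - v)) \<in> magic_lines n"
  unfolding magic_lines_def by blast+

lemma magic_lines_cases:
  assumes "l \<in> magic_lines n"
  obtains (row) i where "l = (\<lambda>v. (i, v))" "i < n"
    | (column) j where "l = (\<lambda>v. (v, j))" "j < n"
    | (diagonal) "l = (\<lambda>v. (v, v))"
    | (antidiagonal) "l = (\<lambda>v. (v, n - 1 - v))"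
  using assms unfolding magic_lines_def by blast

lemma magic_lines_range:
  assumes "l \<in> magic_lines n" "v < n"
  shows "fst (l v) < n" "snd (l v) < n"
  using assms by (auto elim: magic_lines_cases)

lemma general_magic_iff_line_sum:
  "general_magic n g \<longleftrightarrow> (\<exists>s. \<forall>l\<in>magic_lines n. line_sum n g l = s)"
proof
  assume "general_magic n g"
  then obtain s where sums: "\<forall>i<n. (\<Sum>j<n. g i j) = s" "\<forall>j<n. (\<Sum>i<n. g i j) = s"
    "(\<Sum>i<n. g i i) = s" "(\<Sum>i<n. g i (n - 1 - i)) = s"
    unfolding general_magic_def by blast
  have "line_sum n g l = s" if "l \<in> magic_lines n" for l
    using that by (cases rule: magic_lines_cases) (use sums in \<open>simp_all add: line_sum_def\<close>)
  then show "\<exists>s. \<forall>l\<in>magic_lines n. line_sum n g l = s" by blast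
next
  assume "\<exists>s. \<forall>l\<in>magic_lines n. line_sum n g l = s"
  then obtain s where s: "\<And>l. l \<in> magic_lines n \<Longrightarrow> line_sum n g l = s" by blast
  show "general_magic n g"
    unfolding general_magic_def
    using s[OF row_in_magic_lines] s[OF column_in_magic_lines]
      s[OF diagonal_in_magic_lines] s[OF antidiagonal_in_magic_lines]
    by (intro exI[of _ s]) (simp add: line_sum_def)
qed

lemma multimagic_line_sums:
  assumes "multimagic n t a"
  obtains S where "\<And>k l. 1 \<le> k \<Longrightarrow> k \<le> t \<Longrightarrow> l \<in> magic_lines n \<Longrightarrow>
      line_sum n (\<lambda>i j. int (a i j) ^ k) l = S k"
proof -
  have "\<forall>k\<in>{1..t}. \<exists>s. \<forall>l\<in>magic_lines n. line_sum n (\<lambda>i j. int (a i j) ^ k) l = s"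
    using assms by (simp add: multimagic_def general_magic_iff_line_sum)
  then obtain S where "\<forall>k\<in>{1..t}. \<forall>l\<in>magic_lines n. line_sum n (\<lambda>i j. int (a i j) ^ k) l = S k"
    by (rule bchoice[THEN exE])
  then show thesis using that by simp
qed

lemma no_multimagic_2: "1 \<le> t \<Longrightarrow> \<not> multimagic 2 t a"
proof
  assume "1 \<le> t" and ms: "multimagic 2 t a"
  then have "1 \<in> {1..t}" by simp
  with ms have "general_magic 2 (\<lambda>i j. int (a i j) ^ 1)"
    unfolding multimagic_def by blast
  then have "(\<Sum>j<2. int (a 0 j)) = (\<Sum>i<2. int (a i 0))"
    unfolding general_magic_def by auto
  then have "a 0 1 = a 1 0" by (simp add: numeral_2_eq_2)
  moreover have "inj_on (\<lambda>(i, j). a i j) ({..<2} \<times> {..<2})"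
    using ms unfolding multimagic_def bij_betw_def by auto
  ultimately show False
    using inj_onD[of "\<lambda>(i, j). a i j" "{..<2} \<times> {..<2}" "(0, 1)" "(1, 0)"] by simp
qed

lemma sum_lessThan_mult:
  fixes f :: "nat \<Rightarrow> 'a::comm_monoid_add"
  shows "(\<Sum>x<m * n. f x) = (\<Sum>u<m. \<Sum>v<n. f (u * n + v))"
proof -
  have "(\<Sum>x<m * n. f x) = (\<Sum>u<m. sum f {u * n..<u * n + n})"
    by (rule sum.nat_group[symmetric])
  also have "\<dots> = (\<Sum>u<m. \<Sum>v<n. f (u * n + v))"
  proof (rule sum.cong[OF refl])
    fix u
    have "sum f {0 + u * n..<n + u * n} = (\<Sum>v = 0..<n. f (v + u * n))"
      by (rule sum.shift_bounds_nat_ivl)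
    then show "sum f {u * n..<u * n + n} = (\<Sum>v<n. f (u * n + v))"
      by (simp add: atLeast0LessThan add.commute)
  qed
  finally show ?thesis .
qed

lemma reflect_mult_index:
  fixes u v m n :: nat
  assumes "u < m" "v < n"
  shows "m * n - 1 - (u * n + v) = (m - 1 - u) * n + (n - 1 - v)"
proof -
  obtain m' where m': "m = Suc u + m'" using \<open>u < m\<close> less_imp_Suc_add by blast
  obtain n' where n': "n = Suc v + n'" using \<open>v < n\<close> less_imp_Suc_add by blast
  have "m * n = (m' * n + n') + (u * n + v) + 1" unfolding m' n' by (simp add: algebra_simps)
  then show ?thesis using m' n' by simp
qed

lemma magic_lines_mult_decompose:
  assumes "l \<in> magic_lines (m * n)" "n > 0"
  obtains l1 l2 where "l1 \<in> magic_lines m" "l2 \<in> magic_lines n"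
    "\<And>u v. u < m \<Longrightarrow> v < n \<Longrightarrow>
       l (u * n + v) = (fst (l1 u) * n + fst (l2 v), snd (l1 u) * n + snd (l2 v))"
  using assms(1)
proof (cases rule: magic_lines_cases)
  case (row i)
  have "i div n < m" using row(2) by (simp add: less_mult_imp_div_less)
  with assms(2) show thesis
    by (intro that[OF row_in_magic_lines row_in_magic_lines, of "i div n" "i mod n"])
      (simp_all add: row(1))
next
  case (column j)
  have "j div n < m" using column(2) by (simp add: less_mult_imp_div_less)
  with assms(2) show thesis
    by (intro that[OF column_in_magic_lines column_in_magic_lines, of "j div n" "j mod n"])
      (simp_all add: column(1))
next
  case diagonal
  show thesis
    by (rule that[OF diagonal_in_magic_lines diagonal_in_magic_lines]) (simp add: diagonal)
next
  case antidiagonal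
  show thesis
    by (rule that[OF antidiagonal_in_magic_lines antidiagonal_in_magic_lines])
      (simp only: antidiagonal reflect_mult_index fst_conv snd_conv)
qed

lemma power_diff_binomial:
  fixes x K :: "'a::comm_ring_1"
  shows "(K - x) ^ k = (\<Sum>j\<le>k. of_nat (k choose j) * (-1) ^ j * K ^ (k - j) * x ^ j)"
proof -
  have "(K - x) ^ k = (- x + K) ^ k" by simp
  also have "\<dots> = (\<Sum>j\<le>k. of_nat (k choose j) * (- x) ^ j * K ^ (k - j))"
    by (rule binomial_ring)
  also have "\<dots> = (\<Sum>j\<le>k. of_nat (k choose j) * (-1) ^ j * K ^ (k - j) * x ^ j)"
    by (rule sum.cong[OF refl]) (simp only: power_minus[of x] mult_ac)
  finally show ?thesis .
qed

lemma odd_power_add_power_diff: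
  fixes x K :: "'a::comm_ring_1"
  assumes "odd t"
  shows "x ^ t + (K - x) ^ t = (\<Sum>j<t. of_nat (t choose j) * (-1) ^ j * K ^ (t - j) * x ^ j)"
  using assms by (simp add: power_diff_binomial lessThan_Suc_atMost[symmetric])

lemma sum_power_sums_combination:
  fixes x :: "'b \<Rightarrow> 'a::comm_ring_1"
  shows "(\<Sum>v\<in>V. \<Sum>j\<in>J. c j * x v ^ j) = (\<Sum>j\<in>J. c j * (\<Sum>v\<in>V. x v ^ j))"
  by (subst sum.swap) (simp add: sum_distrib_left)

lemma sum_bij_square:
  assumes "bij_betw (\<lambda>(i, j). b i j) ({..<n} \<times> {..<n}) {..<N}"
  shows "(\<Sum>i<n. \<Sum>j<n. g (b i j)) = (\<Sum>x<N. g x)"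
proof -
  have "(\<Sum>i<n. \<Sum>j<n. g (b i j)) = (\<Sum>p\<in>{..<n} \<times> {..<n}. g ((\<lambda>(i, j). b i j) p))"
    by (simp add: sum.cartesian_product case_prod_beta')
  also have "\<dots> = (\<Sum>x<N. g x)" by (rule sum.reindex_bij_betw[OF assms])
  finally show ?thesis .
qed

lemma row_sum_of_bij_square:
  fixes f :: "nat \<Rightarrow> int"
  assumes "bij_betw (\<lambda>(i, j). b i j) ({..<n} \<times> {..<n}) {..<n^2}"
    and "\<And>i. i < n \<Longrightarrow> (\<Sum>j<n. f (b i j)) = s"
  shows "of_nat n * s = (\<Sum>x<n^2. f x)"
  using assms(2) sum_bij_square[OF assms(1), of f] by simp

text \<open>Since the line sums of the complement n^2 - 1 - b are combinations of the power
  sums of b of no larger degree, they are constant; counting then identifies them.\<close>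

lemma complement_line_power_sum:
  fixes b :: "nat \<Rightarrow> nat \<Rightarrow> nat" and n :: nat
  defines "K \<equiv> int (n^2) - 1"
  assumes bij: "bij_betw (\<lambda>(i, j). b i j) ({..<n} \<times> {..<n}) {..<n^2}"
    and sums: "\<And>e l. 1 \<le> e \<Longrightarrow> e \<le> k \<Longrightarrow> l \<in> magic_lines n \<Longrightarrow>
      line_sum n (\<lambda>i j. int (b i j) ^ e) l = S e"
    and "n > 0" "1 \<le> k" "l \<in> magic_lines n"
  shows "line_sum n (\<lambda>i j. (K - int (b i j)) ^ k) l = S k"
proof -
  define D where "D = (\<Sum>j\<le>k. of_nat (k choose j) * (-1) ^ j * K ^ (k - j) *
    (if j = 0 then of_nat n else S j))"
  have line: "line_sum n (\<lambda>i j. (K - int (b i j)) ^ k) l' = D" if "l' \<in> magic_lines n" for l'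
  proof -
    have "(\<Sum>v<n. int (b (fst (l' v)) (snd (l' v))) ^ j) = (if j = 0 then of_nat n else S j)"
      if "j \<le> k" for j
      using sums[of j l'] \<open>l' \<in> magic_lines n\<close> that by (simp add: line_sum_def)
    then show ?thesis
      unfolding D_def line_sum_def power_diff_binomial sum_power_sums_combination
      by (intro sum.cong) simp_all
  qed
  have "of_nat n * D = (\<Sum>x<n^2. (K - int x) ^ k)"
    using line[OF row_in_magic_lines] by (intro row_sum_of_bij_square[OF bij]) (simp add: line_sum_def)
  also have "\<dots> = (\<Sum>x<n^2. int (n^2 - Suc x) ^ k)"
    by (rule sum.cong) (auto simp: K_def of_nat_diff diff_diff_eq)
  also have "\<dots> = (\<Sum>x<n^2. int x ^ k)"
    by (rule sum.nat_diff_reindex)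
  also have "\<dots> = of_nat n * S k"
    using sums[OF \<open>1 \<le> k\<close> order_refl row_in_magic_lines]
    by (intro row_sum_of_bij_square[OF bij, symmetric]) (simp add: line_sum_def)
  finally show ?thesis using line[OF \<open>l \<in> magic_lines n\<close>] \<open>n > 0\<close> by simp
qed

lemma odd_complement_line_sum_const:
  fixes x :: "nat \<Rightarrow> nat \<Rightarrow> int"
  assumes "odd t"
    and sums: "\<And>e l. 1 \<le> e \<Longrightarrow> e < t \<Longrightarrow> l \<in> magic_lines n \<Longrightarrow>
      line_sum n (\<lambda>i j. x i j ^ e) l = S e"
  obtains T where "\<And>l. l \<in> magic_lines n \<Longrightarrow>
      line_sum n (\<lambda>i j. x i j ^ t + (K - x i j) ^ t) l = T"
proof
  fix l assume "l \<in> magic_lines n"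
  then have "(\<Sum>v<n. x (fst (l v)) (snd (l v)) ^ j) = (if j = 0 then of_nat n else S j)"
    if "j < t" for j
    using sums[of j l] that by (simp add: line_sum_def)
  then show "line_sum n (\<lambda>i j. x i j ^ t + (K - x i j) ^ t) l =
    (\<Sum>j<t. of_nat (t choose j) * (-1) ^ j * K ^ (t - j) * (if j = 0 then of_nat n else S j))"
    unfolding line_sum_def odd_power_add_power_diff[OF \<open>odd t\<close>] sum_power_sums_combination
    by (intro sum.cong) simp_all
qed

lemma block_power_sum:
  fixes \<alpha> :: "nat \<Rightarrow> int" and \<rho> :: "nat \<Rightarrow> nat \<Rightarrow> int"
  assumes SA: "\<And>k. 1 \<le> k \<Longrightarrow> k \<le> t \<Longrightarrow> (\<Sum>u<m. \<alpha> u ^ k) = SA k"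
    and SB: "\<And>u k. u < m \<Longrightarrow> 1 \<le> k \<Longrightarrow> k < t \<Longrightarrow> (\<Sum>v<n. \<rho> u v ^ k) = SB k"
    and "e \<le> t"
  shows "(\<Sum>u<m. \<Sum>v<n. (X * \<alpha> u + \<rho> u v) ^ e) =
    (\<Sum>k\<le>e. of_nat (e choose k) * X ^ k * (if k = 0 then (\<Sum>u<m. \<Sum>v<n. \<rho> u v ^ e)
      else SA k * (if k = e then of_nat n else SB (e - k))))"
proof -
  have "(\<Sum>u<m. \<Sum>v<n. (X * \<alpha> u + \<rho> u v) ^ e) =
      (\<Sum>u<m. \<Sum>v<n. \<Sum>k\<le>e. of_nat (e choose k) * X ^ k * (\<alpha> u ^ k * \<rho> u v ^ (e - k)))"
    by (simp add: binomial_ring power_mult_distrib mult.assoc)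
  also have "\<dots> = (\<Sum>u<m. \<Sum>k\<le>e. \<Sum>v<n. of_nat (e choose k) * X ^ k * (\<alpha> u ^ k * \<rho> u v ^ (e - k)))"
    by (rule sum.cong[OF refl], rule sum.swap)
  also have "\<dots> = (\<Sum>k\<le>e. \<Sum>u<m. \<Sum>v<n. of_nat (e choose k) * X ^ k * (\<alpha> u ^ k * \<rho> u v ^ (e - k)))"
    by (rule sum.swap)
  also have "\<dots> = (\<Sum>k\<le>e. of_nat (e choose k) * X ^ k * (\<Sum>u<m. \<alpha> u ^ k * (\<Sum>v<n. \<rho> u v ^ (e - k))))"
    by (simp add: sum_distrib_left)
  also have "\<dots> = (\<Sum>k\<le>e. of_nat (e choose k) * X ^ k * (if k = 0 then (\<Sum>u<m. \<Sum>v<n. \<rho> u v ^ e)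
      else SA k * (if k = e then of_nat n else SB (e - k))))"
  proof (rule sum.cong[OF refl])
    fix k assume "k \<in> {..e}"
    then have "(\<Sum>u<m. \<alpha> u ^ k * (\<Sum>v<n. \<rho> u v ^ (e - k))) =
        SA k * (if k = e then of_nat n else SB (e - k))" if "k \<noteq> 0"
      using that \<open>e \<le> t\<close> SA[of k] SB[of _ "e - k"]
      by (cases "k = e") (simp_all add: sum_distrib_right[symmetric])
    then show "of_nat (e choose k) * X ^ k * (\<Sum>u<m. \<alpha> u ^ k * (\<Sum>v<n. \<rho> u v ^ (e - k))) =
      of_nat (e choose k) * X ^ k * (if k = 0 then (\<Sum>u<m. \<Sum>v<n. \<rho> u v ^ e)
        else SA k * (if k = e then of_nat n else SB (e - k)))"
      by simp
  qed
  finally show ?thesis .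
qed

lemma sum_if_balanced:
  assumes "card {u\<in>{..<2 * h}. P u} = h"
  shows "(\<Sum>u<2 * h. if P u then y else x) = of_nat h * (x + y)"
proof -
  have "{..<2 * h} \<inter> {u. P u} = {u\<in>{..<2 * h}. P u}" by blast
  then have in_P: "card ({..<2 * h} \<inter> {u. P u}) = h" using assms by simp
  have "{..<2 * h} \<inter> - {u. P u} = {..<2 * h} - {u\<in>{..<2 * h}. P u}" by blast
  then have out_P: "card ({..<2 * h} \<inter> - {u. P u}) = h"
    using assms card_Diff_subset[of "{u\<in>{..<2 * h}. P u}" "{..<2 * h}"] by force
  show ?thesis
    unfolding sum.If_cases[OF finite_lessThan] sum_constant in_P out_P by (simp add: algebra_simps)
qed

lemma card_filter_half:
  fixes \<sigma> :: "nat \<Rightarrow> nat"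
  assumes inj: "inj_on \<sigma> {..<h}" and range: "\<sigma> ` {..<h} \<subseteq> {h..<2 * h}"
    and opposite: "\<And>i. i < h \<Longrightarrow> P i \<noteq> P (\<sigma> i)"
  shows "card {u\<in>{..<2 * h}. P u} = h"
proof -
  have "\<sigma> ` {..<h} = {h..<2 * h}"
    using card_image[OF inj] by (intro card_subset_eq[OF _ range]) simp_all
  with inj have bij: "bij_betw \<sigma> {..<h} {h..<2 * h}" by (simp add: bij_betw_def)
  define g where "g u = (if P u then 1 else 0 :: nat)" for u
  have "card {u\<in>{..<2 * h}. P u} = (\<Sum>u<2 * h. g u)"
    by (simp add: g_def sum.inter_filter[symmetric])
  also have "\<dots> = (\<Sum>u<h. g u) + (\<Sum>u\<in>{h..<2 * h}. g u)"
  proof -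
    have "sum g ({..<h} \<union> {h..<2 * h}) = (\<Sum>u<h. g u) + (\<Sum>u\<in>{h..<2 * h}. g u)"
      by (rule sum.union_disjoint) auto
    moreover have "{..<h} \<union> {h..<2 * h} = {..<2 * h}" by auto
    ultimately show ?thesis by simp
  qed
  also have "(\<Sum>u\<in>{h..<2 * h}. g u) = (\<Sum>u<h. g (\<sigma> u))"
    by (rule sum.reindex_bij_betw[OF bij, symmetric])
  also have "(\<Sum>u<h. g u) + (\<Sum>u<h. g (\<sigma> u)) = (\<Sum>u<h. 1)"
    unfolding sum.distrib[symmetric] using opposite by (intro sum.cong) (auto simp: g_def)
  finally show ?thesis by simp
qed

text \<open>Column parity, flipped in the upper half of the rows; for odd h the four cells in
  rows 0, h and columns 0, 2h - 1 are flipped once more, which balances the diagonals.\<close>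

definition half_pattern :: "nat \<Rightarrow> nat \<Rightarrow> nat \<Rightarrow> bool" where
  "half_pattern h i j \<longleftrightarrow> odd (j + (if i < h then 1 else 0) +
      (if odd h \<and> (i = 0 \<or> i = h) \<and> (j = 0 \<or> j = 2 * h - 1) then 1 else 0))"

lemma half_pattern_balanced:
  assumes "2 \<le> h" "l \<in> magic_lines (2 * h)"
  shows "card {u\<in>{..<2 * h}. half_pattern h (fst (l u)) (snd (l u))} = h"
proof -
  define reflect where "reflect j = 2 * h - 1 - j" for j
  define shift where "shift i = (if i = 0 then 2 * h - 1 else h + i - 1)" for i
  have reflect: "inj_on reflect {..<h}" "reflect ` {..<h} \<subseteq> {h..<2 * h}"
    by (auto simp: reflect_def inj_on_def)
  have add_h: "inj_on (\<lambda>i. i + h) {..<h}" "(\<lambda>i. i + h) ` {..<h} \<subseteq> {h..<2 * h}"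
    by auto
  have shift: "inj_on shift {..<h}" "shift ` {..<h} \<subseteq> {h..<2 * h}"
    using assms(1) by (auto simp: shift_def inj_on_def)
  from assms(2) show ?thesis
  proof (cases rule: magic_lines_cases)
    case (row i)
    show ?thesis
      by (rule card_filter_half[OF reflect])
        (unfold row reflect_def half_pattern_def, simp; presburger)
  next
    case (column j)
    show ?thesis
      by (rule card_filter_half[OF add_h])
        (unfold column half_pattern_def, simp; presburger)
  next
    case diagonal
    show ?thesis
    proof (cases "even h")
      case True
      show ?thesis
        by (rule card_filter_half[OF add_h])
          (insert True, unfold diagonal half_pattern_def, simp; presburger)
    next
      case False
      show ?thesis
        by (rule card_filter_half[OF shift])
          (insert assms(1) False, unfold diagonal shift_def half_pattern_def, simp; presburger)
    qed
  next
    case antidiagonal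
    show ?thesis
    proof (cases "even h")
      case True
      show ?thesis
        by (rule card_filter_half[OF add_h])
          (insert True, unfold antidiagonal half_pattern_def, simp; presburger)
    next
      case False
      show ?thesis
        by (rule card_filter_half[OF shift])
          (insert assms(1) False, unfold antidiagonal shift_def half_pattern_def, simp; presburger)
    qed
  qed
qed

definition block_square ::
  "nat \<Rightarrow> (nat \<Rightarrow> nat \<Rightarrow> bool) \<Rightarrow> (nat \<Rightarrow> nat \<Rightarrow> nat) \<Rightarrow> (nat \<Rightarrow> nat \<Rightarrow> nat) \<Rightarrow> nat \<Rightarrow> nat \<Rightarrow> nat"
  where "block_square n p a b I J = n^2 * a (I div n) (J div n) +
    (if p (I div n) (J div n) then n^2 - 1 - b (I mod n) (J mod n) else b (I mod n) (J mod n))"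

lemma block_square_bij:
  assumes bij_a: "bij_betw (\<lambda>(i, j). a i j) ({..<m} \<times> {..<m}) {..<m^2}"
    and bij_b: "bij_betw (\<lambda>(i, j). b i j) ({..<n} \<times> {..<n}) {..<n^2}"
    and "n > 0"
  shows "bij_betw (\<lambda>(I, J). block_square n p a b I J) ({..<m * n} \<times> {..<m * n}) {..<(m * n)^2}"
proof -
  define r where "r I J = (if p (I div n) (J div n) then n^2 - 1 - b (I mod n) (J mod n)
    else b (I mod n) (J mod n))" for I J
  have b_lt: "b (I mod n) (J mod n) < n^2" for I J
    using bij_betwE[OF bij_b] \<open>n > 0\<close> by auto
  have r_lt: "r I J < n^2" for I J
    using b_lt[of I J] by (auto simp: r_def)
  have block_div: "block_square n p a b I J div n^2 = a (I div n) (J div n)"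
    and block_mod: "block_square n p a b I J mod n^2 = r I J" for I J
    using r_lt[of I J] \<open>n > 0\<close> by (simp_all add: block_square_def r_def[symmetric])
  have div_lt: "I div n < m" if "I < m * n" for I
    using that by (simp add: less_mult_imp_div_less)
  have inj: "inj_on (\<lambda>(I, J). block_square n p a b I J) ({..<m * n} \<times> {..<m * n})"
  proof (rule inj_onI, clarify)
    fix I J I' J'
    assume in_range: "I < m * n" "J < m * n" "I' < m * n" "J' < m * n"
      and eq: "block_square n p a b I J = block_square n p a b I' J'"
    have "a (I div n) (J div n) = a (I' div n) (J' div n)"
      using block_div[of I J] block_div[of I' J'] eq by simp
    then have blocks: "I div n = I' div n" "J div n = J' div n"
      using inj_onD[OF bij_betw_imp_inj_on[OF bij_a], of "(I div n, J div n)" "(I' div n, J' div n)"]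
        div_lt in_range by auto
    have "r I J = r I' J'"
      using block_mod[of I J] block_mod[of I' J'] eq by simp
    then have "b (I mod n) (J mod n) = b (I' mod n) (J' mod n)"
      using blocks b_lt[of I J] b_lt[of I' J'] by (auto simp: r_def split: if_splits)
    then have "I mod n = I' mod n" "J mod n = J' mod n"
      using inj_onD[OF bij_betw_imp_inj_on[OF bij_b], of "(I mod n, J mod n)" "(I' mod n, J' mod n)"]
        \<open>n > 0\<close> by auto
    with blocks show "I = I' \<and> J = J'"
      by (metis div_mult_mod_eq)
  qed
  have "block_square n p a b I J < (m * n)^2" if "I < m * n" "J < m * n" for I J
  proof -
    have "a (I div n) (J div n) < m^2"
      using bij_betwE[OF bij_a] div_lt that by auto
    then have "block_square n p a b I J div n^2 < m^2" by (simp add: block_div)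
    then show ?thesis
      using \<open>n > 0\<close> by (simp add: div_less_iff_less_mult power_mult_distrib)
  qed
  then have "(\<lambda>(I, J). block_square n p a b I J) ` ({..<m * n} \<times> {..<m * n}) \<subseteq> {..<(m * n)^2}"
    by auto
  moreover have "card ((\<lambda>(I, J). block_square n p a b I J) ` ({..<m * n} \<times> {..<m * n})) =
      card {..<(m * n)^2}"
    using card_image[OF inj] by (simp add: card_cartesian_product power2_eq_square)
  ultimately show ?thesis
    using inj card_subset_eq[of "{..<(m * n)^2}"] by (simp add: bij_betw_def)
qed

lemma block_square_blockwise:
  assumes "i' < n" "j' < n"
  shows "block_square n p a b (i * n + i') (j * n + j') =
    n^2 * a i j + (if p i j then n^2 - 1 - b i' j' else b i' j')"
  using assms by (simp add: block_square_def)

context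
  fixes m n h t :: nat and a b :: "nat \<Rightarrow> nat \<Rightarrow> nat" and p :: "nat \<Rightarrow> nat \<Rightarrow> bool"
    and SA SB :: "nat \<Rightarrow> int" and T :: int
  assumes m_eq: "m = 2 * h" and n_pos: "n > 0"
    and b_lt: "\<And>i j. i < n \<Longrightarrow> j < n \<Longrightarrow> b i j < n^2"
    and SA: "\<And>k l. 1 \<le> k \<Longrightarrow> k \<le> t \<Longrightarrow> l \<in> magic_lines m \<Longrightarrow>
      line_sum m (\<lambda>i j. int (a i j) ^ k) l = SA k"
    and SB: "\<And>k l. 1 \<le> k \<Longrightarrow> k < t \<Longrightarrow> l \<in> magic_lines n \<Longrightarrow>
      line_sum n (\<lambda>i j. int (b i j) ^ k) l = SB k"
    and SB_complement: "\<And>k l. 1 \<le> k \<Longrightarrow> k < t \<Longrightarrow> l \<in> magic_lines n \<Longrightarrow>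
      line_sum n (\<lambda>i j. (int (n^2) - 1 - int (b i j)) ^ k) l = SB k"
    and T: "\<And>l. l \<in> magic_lines n \<Longrightarrow>
      line_sum n (\<lambda>i j. int (b i j) ^ t + (int (n^2) - 1 - int (b i j)) ^ t) l = T"
    and balanced: "\<And>l. l \<in> magic_lines m \<Longrightarrow> card {u\<in>{..<m}. p (fst (l u)) (snd (l u))} = h"
begin

lemma block_square_line_power_sum:
  assumes l1: "l1 \<in> magic_lines m" and l2: "l2 \<in> magic_lines n" and "1 \<le> e" "e \<le> t"
  shows "(\<Sum>u<m. \<Sum>v<n.
      int (block_square n p a b (fst (l1 u) * n + fst (l2 v)) (snd (l1 u) * n + snd (l2 v))) ^ e) =
    (\<Sum>k\<le>e. of_nat (e choose k) * int (n^2) ^ k *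
      (if k = 0 then (if e < t then of_nat m * SB e else of_nat h * T)
       else SA k * (if k = e then of_nat n else SB (e - k))))"
proof -
  define \<alpha> where "\<alpha> u = int (a (fst (l1 u)) (snd (l1 u)))" for u
  define \<beta> where "\<beta> v = int (b (fst (l2 v)) (snd (l2 v)))" for v
  define K where "K = int (n^2) - 1"
  define \<rho> where "\<rho> u v = (if p (fst (l1 u)) (snd (l1 u)) then K - \<beta> v else \<beta> v)" for u v
  have entry: "int (block_square n p a b (fst (l1 u) * n + fst (l2 v)) (snd (l1 u) * n + snd (l2 v))) =
      int (n^2) * \<alpha> u + \<rho> u v" if "v < n" for u v
    using magic_lines_range[OF l2 that] b_lt[of "fst (l2 v)" "snd (l2 v)"]
    by (simp add: block_square_blockwise \<alpha>_def \<beta>_def \<rho>_def K_def of_nat_diff)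
  have \<rho>_sum: "(\<Sum>v<n. \<rho> u v ^ k) = SB k" if "1 \<le> k" "k < t" for u k
    using SB[OF that l2] SB_complement[OF that l2, folded K_def]
    by (cases "p (fst (l1 u)) (snd (l1 u))") (simp_all add: line_sum_def \<rho>_def \<beta>_def)
  have \<rho>_top: "(\<Sum>u<m. \<Sum>v<n. \<rho> u v ^ e) = (if e < t then of_nat m * SB e else of_nat h * T)"
  proof (cases "e < t")
    case True
    then show ?thesis using \<rho>_sum[OF \<open>1 \<le> e\<close>] by simp
  next
    case False
    with \<open>e \<le> t\<close> have "e = t" by simp
    have "T = (\<Sum>v<n. \<beta> v ^ t) + (\<Sum>v<n. (K - \<beta> v) ^ t)"
      using T[OF l2, folded K_def] by (simp add: line_sum_def \<beta>_def sum.distrib)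
    moreover have "(\<Sum>u<m. \<Sum>v<n. \<rho> u v ^ t) = (\<Sum>u<2 * h. if p (fst (l1 u)) (snd (l1 u))
        then (\<Sum>v<n. (K - \<beta> v) ^ t) else (\<Sum>v<n. \<beta> v ^ t))"
      unfolding m_eq by (intro sum.cong) (simp_all add: \<rho>_def)
    ultimately show ?thesis
      using \<open>e = t\<close> sum_if_balanced[OF balanced[OF l1, unfolded m_eq]] by simp
  qed
  have "(\<Sum>u<m. \<Sum>v<n. int (block_square n p a b (fst (l1 u) * n + fst (l2 v))
      (snd (l1 u) * n + snd (l2 v))) ^ e) = (\<Sum>u<m. \<Sum>v<n. (int (n^2) * \<alpha> u + \<rho> u v) ^ e)"
    by (intro sum.cong) (simp_all add: entry)
  also have "\<dots> = (\<Sum>k\<le>e. of_nat (e choose k) * int (n^2) ^ k *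
      (if k = 0 then (\<Sum>u<m. \<Sum>v<n. \<rho> u v ^ e) else SA k * (if k = e then of_nat n else SB (e - k))))"
    using SA[OF _ _ l1] \<rho>_sum \<open>e \<le> t\<close>
    by (intro block_power_sum) (simp_all add: line_sum_def \<alpha>_def)
  finally show ?thesis unfolding \<rho>_top .
qed

lemma block_square_general_magic:
  assumes "1 \<le> e" "e \<le> t"
  shows "general_magic (m * n) (\<lambda>I J. int (block_square n p a b I J) ^ e)"
proof -
  have "line_sum (m * n) (\<lambda>I J. int (block_square n p a b I J) ^ e) l =
    (\<Sum>k\<le>e. of_nat (e choose k) * int (n^2) ^ k *
      (if k = 0 then (if e < t then of_nat m * SB e else of_nat h * T)
       else SA k * (if k = e then of_nat n else SB (e - k))))"
    if l: "l \<in> magic_lines (m * n)" for l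
  proof -
    obtain l1 l2 where l1: "l1 \<in> magic_lines m" and l2: "l2 \<in> magic_lines n"
      and l_eq: "\<And>u v. u < m \<Longrightarrow> v < n \<Longrightarrow>
        l (u * n + v) = (fst (l1 u) * n + fst (l2 v), snd (l1 u) * n + snd (l2 v))"
      using magic_lines_mult_decompose[OF l n_pos] by blast
    have "line_sum (m * n) (\<lambda>I J. int (block_square n p a b I J) ^ e) l =
      (\<Sum>u<m. \<Sum>v<n.
        int (block_square n p a b (fst (l1 u) * n + fst (l2 v)) (snd (l1 u) * n + snd (l2 v))) ^ e)"
      unfolding line_sum_def sum_lessThan_mult by (intro sum.cong) (simp_all add: l_eq)
    also note block_square_line_power_sum[OF l1 l2 assms]
    finally show ?thesis .
  qed
  then show ?thesis
    unfolding general_magic_iff_line_sum by blast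
qed

end

lemma multimagic_complement_line_sums:
  assumes b: "multimagic n (t - 1) b" and "odd t" "n > 0"
  obtains SB T where
    "\<And>k l. 1 \<le> k \<Longrightarrow> k < t \<Longrightarrow> l \<in> magic_lines n \<Longrightarrow>
      line_sum n (\<lambda>i j. int (b i j) ^ k) l = SB k"
    "\<And>k l. 1 \<le> k \<Longrightarrow> k < t \<Longrightarrow> l \<in> magic_lines n \<Longrightarrow>
      line_sum n (\<lambda>i j. (int (n^2) - 1 - int (b i j)) ^ k) l = SB k"
    "\<And>l. l \<in> magic_lines n \<Longrightarrow>
      line_sum n (\<lambda>i j. int (b i j) ^ t + (int (n^2) - 1 - int (b i j)) ^ t) l = T"
proof -
  obtain SB where SB_le: "\<And>k l. 1 \<le> k \<Longrightarrow> k \<le> t - 1 \<Longrightarrow> l \<in> magic_lines n \<Longrightarrow>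
      line_sum n (\<lambda>i j. int (b i j) ^ k) l = SB k"
    using multimagic_line_sums[OF b] by blast
  have SB: "line_sum n (\<lambda>i j. int (b i j) ^ k) l = SB k"
    if "1 \<le> k" "k < t" "l \<in> magic_lines n" for k l
    using SB_le[OF that(1) _ that(3)] that(2) by simp
  have bij_b: "bij_betw (\<lambda>(i, j). b i j) ({..<n} \<times> {..<n}) {..<n^2}"
    using b by (simp add: multimagic_def)
  have SB_complement: "line_sum n (\<lambda>i j. (int (n^2) - 1 - int (b i j)) ^ k) l = SB k"
    if "1 \<le> k" "k < t" "l \<in> magic_lines n" for k l
    using that \<open>n > 0\<close> by (intro complement_line_power_sum[OF bij_b]) (auto intro: SB)
  obtain T where T: "\<And>l. l \<in> magic_lines n \<Longrightarrow>
      line_sum n (\<lambda>i j. int (b i j) ^ t + (int (n^2) - 1 - int (b i j)) ^ t) l = T"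
    using odd_complement_line_sum_const[OF \<open>odd t\<close> SB] by blast
  show thesis by (rule that[of SB T, OF SB SB_complement T])
qed

lemma multimagic_block_square:
  assumes a: "multimagic m t a" and b: "multimagic n (t - 1) b"
    and "odd t" "m = 2 * h" "2 \<le> h" "n > 0"
  shows "multimagic (m * n) t (block_square n (half_pattern h) a b)"
proof -
  obtain SA where SA: "\<And>k l. 1 \<le> k \<Longrightarrow> k \<le> t \<Longrightarrow> l \<in> magic_lines m \<Longrightarrow>
      line_sum m (\<lambda>i j. int (a i j) ^ k) l = SA k"
    using multimagic_line_sums[OF a] by blast
  obtain SB T where SB: "\<And>k l. 1 \<le> k \<Longrightarrow> k < t \<Longrightarrow> l \<in> magic_lines n \<Longrightarrow>
      line_sum n (\<lambda>i j. int (b i j) ^ k) l = SB k"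
    and SB_complement: "\<And>k l. 1 \<le> k \<Longrightarrow> k < t \<Longrightarrow> l \<in> magic_lines n \<Longrightarrow>
      line_sum n (\<lambda>i j. (int (n^2) - 1 - int (b i j)) ^ k) l = SB k"
    and T: "\<And>l. l \<in> magic_lines n \<Longrightarrow>
      line_sum n (\<lambda>i j. int (b i j) ^ t + (int (n^2) - 1 - int (b i j)) ^ t) l = T"
    using multimagic_complement_line_sums[OF b \<open>odd t\<close> \<open>n > 0\<close>] by blast
  have bij_a: "bij_betw (\<lambda>(i, j). a i j) ({..<m} \<times> {..<m}) {..<m^2}"
    and bij_b: "bij_betw (\<lambda>(i, j). b i j) ({..<n} \<times> {..<n}) {..<n^2}"
    using a b by (simp_all add: multimagic_def)
  have "general_magic (m * n) (\<lambda>I J. int (block_square n (half_pattern h) a b I J) ^ e)"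
    if "e \<in> {1..t}" for e
    using that \<open>n > 0\<close> bij_betwE[OF bij_b]
    by (intro block_square_general_magic[where p = "half_pattern h", OF \<open>m = 2 * h\<close> _ _
        SA SB SB_complement T half_pattern_balanced[OF \<open>2 \<le> h\<close>, folded \<open>m = 2 * h\<close>]]) auto
  then show ?thesis
    using block_square_bij[OF bij_a bij_b \<open>n > 0\<close>] by (simp add: multimagic_def)
qed

theorem lemma14:
  fixes m n t :: nat
  assumes "even m" and "m > 0" and "odd t" and "t \<ge> 3" and "n \<ge> 1"
    and "\<exists>a. multimagic m t a"
    and "\<exists>b. multimagic n (t - 1) b"
  shows "\<exists>c. multimagic (m * n) t c"
proof -
  obtain a where a: "multimagic m t a" using assms(6) by blast
  obtain b where b: "multimagic n (t - 1) b" using assms(7) by blast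
  have "m \<noteq> 2" using no_multimagic_2[of t a] a \<open>t \<ge> 3\<close> by auto
  then obtain h where "m = 2 * h" "2 \<le> h"
    using \<open>even m\<close> \<open>m > 0\<close> by (elim evenE) auto
  then show ?thesis
    using multimagic_block_square[OF a b \<open>odd t\<close>] \<open>n \<ge> 1\<close> by auto
qed

end
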